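(* Let $\mathcal T=\boxtimes ABCD$ be a (nondegenerate) tetrahedron. The following are equivalent: (1) $\mathcal T$ has an obtuse path; (2) there exists a point $O\in\operatorname{int}\mathcal T$ such that $(\mathcal T,O)$ is monostable; (3) for every face $F$ of $\mathcal T$ there exists a point $O_F\in\operatorname{int}\mathcal T$ such that $(\mathcal T,O_F)$ is monostable with its unique stable equilibrium on $F$.
   Context: A weighted polyhedron is a pair $(\mathcal P,O)$ with $\mathcal P$ a convex polyhedron and $O\in\operatorname{int}\mathcal P$ (thought of as the center of mass; no other restriction on $O$). $(\mathcal P,O)$ is in equilibrium on a face, edge or vertex $X$ if there exists $Q$ in the relative interior of $X$ (a vertex is its own relative interior) such that the plane perpendicular to the segment $[O,Q]$ at $Q$ supports $\mathcal P$. The equilibrium is stable if $X$ is a face, unstable if $X$ is a vertex. $(\mathcal P,O)$ is monostable if it has exactly one stable equilibrium (exactly one face carries an equilibrium). A tetrahedron has an obtuse path if, for some labelling $A,B,C,D$ of its vertices, the three edges $\overline{AB},\overline{BC},\overline{CD}$ all have obtuse dihedral angles (i.e. three edges with obtuse dihedral angles having no common vertex). *)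

theory Defs
  imports "HOL-Analysis.Analysis"
begin

definition perp_plane_supports :: "(real^3) set \<Rightarrow> real^3 \<Rightarrow> real^3 \<Rightarrow> bool" where
  "perp_plane_supports P G Q \<longleftrightarrow> Q \<noteq> G \<and> Q \<in> P \<and> (\<forall>X\<in>P. (X - Q) \<bullet> (Q - G) \<le> 0)"

definition equilibrium_on :: "(real^3) set \<Rightarrow> real^3 \<Rightarrow> (real^3) set \<Rightarrow> bool" where
  "equilibrium_on P G X \<longleftrightarrow> (\<exists>Q \<in> rel_interior X. perp_plane_supports P G Q)"

definition facet3 :: "(real^3) set \<Rightarrow> (real^3) set \<Rightarrow> bool" where
  "facet3 F P \<longleftrightarrow> F face_of P \<and> aff_dim F = 2"

definition stable_equilibrium_on :: "(real^3) set \<Rightarrow> real^3 \<Rightarrow> (real^3) set \<Rightarrow> bool" where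
  "stable_equilibrium_on P G F \<longleftrightarrow> facet3 F P \<and> equilibrium_on P G F"

definition monostable :: "(real^3) set \<Rightarrow> real^3 \<Rightarrow> bool" where
  "monostable P G \<longleftrightarrow> (\<exists>!F. stable_equilibrium_on P G F)"

definition vec_angle :: "real^3 \<Rightarrow> real^3 \<Rightarrow> real" where
  "vec_angle u v = arccos ((u \<bullet> v) / (norm u * norm v))"

definition perp_comp :: "real^3 \<Rightarrow> real^3 \<Rightarrow> real^3" where
  "perp_comp d w = w - ((w \<bullet> d) / (d \<bullet> d)) *\<^sub>R d"

text \<open>Dihedral angle of the tetrahedron ABCD at the edge AB, i.e. the angle between the
  faces ABC and ABD along their common edge AB.\<close>
definition dihedral_angle :: "real^3 \<Rightarrow> real^3 \<Rightarrow> real^3 \<Rightarrow> real^3 \<Rightarrow> real" where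
  "dihedral_angle A B C D = vec_angle (perp_comp (B - A) (C - A)) (perp_comp (B - A) (D - A))"

text \<open>The tetrahedron ABCD has an obtuse path: for some relabelling a,b,c,d of its vertices,
  the edges ab, bc, cd all have obtuse dihedral angles.\<close>
definition has_obtuse_path :: "real^3 \<Rightarrow> real^3 \<Rightarrow> real^3 \<Rightarrow> real^3 \<Rightarrow> bool" where
  "has_obtuse_path A B C D \<longleftrightarrow>
     (\<exists>a b c d. {a, b, c, d} = {A, B, C, D} \<and> distinct [a, b, c, d] \<and>
        dihedral_angle a b c d > pi / 2 \<and>
        dihedral_angle b c a d > pi / 2 \<and>
        dihedral_angle c d a b > pi / 2)"

end

theory Submission
  imports Defs
begin

text \<open>Write \<open>G\<close> in barycentric coordinates \<open>l\<close>. There is an equilibrium on the face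
  \<open>XYZ\<close> opposite \<open>P\<close> iff the foot of the perpendicular from \<open>G\<close> lies inside the triangle,
  that is, iff for each vertex \<open>X\<close> of the face, with opposite edge \<open>YZ\<close>,
  \<open>l X |X'|\<^sup>2 + l P \<langle>P', X'\<rangle> > 0\<close>, where \<open>P'\<close> and \<open>X'\<close> are the components of \<open>P - Y\<close> and
  \<open>X - Y\<close> orthogonal to \<open>YZ\<close>. The second term is negative only if the dihedral angle at
  \<open>YZ\<close> is obtuse, and if the sum is not positive then \<open>G\<close> is strictly closer to the plane of
  the face \<open>PYZ\<close> than to that of \<open>XYZ\<close>.

  If \<open>G\<close> is monostable, each of the three faces without equilibrium is therefore joined
  across an obtuse edge to a strictly closer face. These three edges form a spanning tree of
  the four faces; it is not a star, since no face has three obtuse edges, so it is a path of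
  faces, which is an obtuse path of edges. Conversely, given such a path of faces and a target
  face, weights that grow by a large factor along the path away from the target make it the
  only face with an equilibrium.\<close>

section \<open>Perpendiculars to an edge and dihedral angles\<close>

definition perp_to_line :: "real^3 \<Rightarrow> real^3 \<Rightarrow> real^3 \<Rightarrow> real^3" where
  "perp_to_line Y Z V = perp_comp (Z - Y) (V - Y)"

definition dihedral_inner :: "real^3 \<Rightarrow> real^3 \<Rightarrow> real^3 \<Rightarrow> real^3 \<Rightarrow> real" where
  "dihedral_inner Y Z W X = perp_to_line Y Z W \<bullet> perp_to_line Y Z X"

lemma perp_to_line_eq:
  "perp_to_line Y Z V = (V - Y) - (((V - Y) \<bullet> (Z - Y)) / ((Z - Y) \<bullet> (Z - Y))) *\<^sub>R (Z - Y)"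
  unfolding perp_to_line_def perp_comp_def ..

lemma perp_to_line_orthogonal: "perp_to_line Y Z V \<bullet> (Z - Y) = 0"
proof (cases "Z = Y")
  case False
  then have "(Z - Y) \<bullet> (Z - Y) \<noteq> 0" by simp
  then show ?thesis unfolding perp_to_line_eq by (simp add: inner_diff_left)
qed simp

lemma perp_to_line_commute: "perp_to_line Z Y V = perp_to_line Y Z V"
proof -
  have shift: "perp_comp d (w - d) = perp_comp d w" for d w :: "real^3"
  proof (cases "d = 0")
    case False
    then have "d \<bullet> d \<noteq> 0" by simp
    then show ?thesis unfolding perp_comp_def
      by (simp add: inner_diff_left diff_divide_distrib algebra_simps)
  qed simp
  have neg: "perp_comp (- d) w = perp_comp d w" for d w :: "real^3"
    by (simp add: perp_comp_def)
  have "Y - Z = - (Z - Y)" "V - Z = (V - Y) - (Z - Y)"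
    by simp_all
  then show ?thesis
    unfolding perp_to_line_def by (simp only: neg shift)
qed

lemma inner_perp_to_line: "(V - Y) \<bullet> perp_to_line Y Z X = dihedral_inner Y Z V X"
proof -
  define k where "k = ((V - Y) \<bullet> (Z - Y)) / ((Z - Y) \<bullet> (Z - Y))"
  have "V - Y = perp_to_line Y Z V + k *\<^sub>R (Z - Y)"
    by (simp add: perp_to_line_eq k_def)
  then have "(V - Y) \<bullet> perp_to_line Y Z X
      = perp_to_line Y Z V \<bullet> perp_to_line Y Z X + k * ((Z - Y) \<bullet> perp_to_line Y Z X)"
    by (metis inner_add_left inner_scaleR_left)
  moreover have "(Z - Y) \<bullet> perp_to_line Y Z X = 0"
    using perp_to_line_orthogonal[of Y Z X] by (simp add: inner_commute)
  ultimately show ?thesis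
    by (simp add: dihedral_inner_def)
qed

lemma dihedral_inner_commute: "dihedral_inner Y Z W X = dihedral_inner Y Z X W"
  by (simp add: dihedral_inner_def inner_commute)

lemma dihedral_inner_edge_commute: "dihedral_inner Z Y W X = dihedral_inner Y Z W X"
  by (simp add: dihedral_inner_def perp_to_line_commute)

lemma dihedral_inner_self: "dihedral_inner Y Z X X = norm (perp_to_line Y Z X)^2"
  by (simp add: dihedral_inner_def power2_norm_eq_inner)

lemma inner_perp_to_line_eq_0:
  assumes "v \<bullet> (Z - Y) = 0" "v \<bullet> (X - Y) = 0"
  shows "v \<bullet> perp_to_line Y Z X = 0"
  using assms by (simp add: perp_to_line_eq inner_diff_right)

lemma perp_to_line_nonzero:
  assumes "\<not> affine_dependent {X, Y, Z}" "X \<noteq> Y" "X \<noteq> Z"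
  shows "perp_to_line Y Z X \<noteq> 0"
proof
  define k where "k = ((X - Y) \<bullet> (Z - Y)) / ((Z - Y) \<bullet> (Z - Y))"
  assume "perp_to_line Y Z X = 0"
  then have "X = (1 - k) *\<^sub>R Y + k *\<^sub>R Z"
    by (simp add: perp_to_line_eq k_def algebra_simps)
  then have "X \<in> affine hull {Y, Z}"
    unfolding affine_hull_2 by force
  moreover have "{X, Y, Z} - {X} = {Y, Z}"
    using assms(2,3) by auto
  ultimately have "X \<in> affine hull ({X, Y, Z} - {X})"
    by simp
  with assms(1) show False
    unfolding affine_dependent_def by blast
qed

lemma vec_angle_obtuse_iff: "vec_angle u v > pi / 2 \<longleftrightarrow> u \<bullet> v < 0"
proof -
  define t where "t = (u \<bullet> v) / (norm u * norm v)"
  have "-1 \<le> t \<and> t \<le> 1 \<and> (t < 0 \<longleftrightarrow> u \<bullet> v < 0)"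
  proof (cases "norm u * norm v = 0")
    case True
    then show ?thesis by (auto simp: t_def)
  next
    case False
    then have "0 < norm u * norm v" by simp
    moreover have "\<bar>u \<bullet> v\<bar> \<le> norm u * norm v"
      by (rule Cauchy_Schwarz_ineq2)
    ultimately show ?thesis
      unfolding t_def by (simp add: divide_simps abs_le_iff divide_less_0_iff)
  qed
  moreover have "arccos 0 < arccos t \<longleftrightarrow> t < 0" if "-1 \<le> t" "t \<le> 1"
  proof
    assume "arccos 0 < arccos t"
    show "t < 0"
    proof (rule ccontr)
      assume "\<not> t < 0"
      then have "arccos t \<le> arccos 0"
        using that arccos_le_arccos[of 0 t] by simp
      with \<open>arccos 0 < arccos t\<close> show False by simp
    qed
  next
    assume "t < 0"
    then show "arccos 0 < arccos t"
      using that arccos_less_arccos[of t 0] by simp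
  qed
  ultimately show ?thesis
    unfolding vec_angle_def t_def[symmetric] by simp
qed

lemma dihedral_angle_obtuse_iff: "dihedral_angle Y Z W X > pi / 2 \<longleftrightarrow> dihedral_inner Y Z W X < 0"
  unfolding dihedral_angle_def dihedral_inner_def perp_to_line_def by (rule vec_angle_obtuse_iff)

section \<open>Planes, triangles and altitudes\<close>

lemma affine_hull_3_param: "Y + s *\<^sub>R (X - Y) + t *\<^sub>R (Z - Y) \<in> affine hull {X, Y, Z}"
proof -
  have "Y + s *\<^sub>R (X - Y) + t *\<^sub>R (Z - Y) = s *\<^sub>R X + (1 - s - t) *\<^sub>R Y + t *\<^sub>R Z"
    by (simp add: algebra_simps)
  then show ?thesis
    unfolding affine_hull_3 by force
qed

lemma orthogonal_affine_hull_3: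
  assumes "v \<bullet> (X - Y) = 0" "v \<bullet> (Z - Y) = 0" "W \<in> affine hull {X, Y, Z}"
  shows "v \<bullet> (W - Y) = 0"
proof -
  obtain a b c where "W = a *\<^sub>R X + b *\<^sub>R Y + c *\<^sub>R Z" "a + b + c = 1"
    using assms(3) unfolding affine_hull_3 by blast
  then have "W - Y = a *\<^sub>R (X - Y) + c *\<^sub>R (Z - Y)"
    by (simp add: algebra_simps flip: scaleR_add_left)
  then show ?thesis
    using assms(1,2) by (simp add: inner_add_right)
qed

lemma inner_perp_to_line_affine_coords:
  assumes "Q = a *\<^sub>R X + b *\<^sub>R Y + c *\<^sub>R Z" "a + b + c = 1"
  shows "(Q - Y) \<bullet> perp_to_line Y Z X = a * norm (perp_to_line Y Z X)^2"
proof -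
  have "Q - Y = a *\<^sub>R (X - Y) + c *\<^sub>R (Z - Y)"
    using assms by (simp add: algebra_simps flip: scaleR_add_left)
  then have "(Q - Y) \<bullet> perp_to_line Y Z X
      = a * ((X - Y) \<bullet> perp_to_line Y Z X) + c * ((Z - Y) \<bullet> perp_to_line Y Z X)"
    by (simp add: inner_add_left)
  moreover have "(Z - Y) \<bullet> perp_to_line Y Z X = 0"
    by (metis inner_commute perp_to_line_orthogonal)
  ultimately show ?thesis
    by (simp add: inner_perp_to_line dihedral_inner_self)
qed

text \<open>For a non-degenerate triangle \<open>XYZ\<close>, \<open>altitude P X Y Z\<close> is \<open>P\<close> minus its orthogonal
  projection onto the plane \<open>XYZ\<close>: inside the plane perpendicular to \<open>YZ\<close>, remove from the
  component of \<open>P - Y\<close> its projection onto the component of \<open>X - Y\<close>.\<close>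

definition altitude :: "real^3 \<Rightarrow> real^3 \<Rightarrow> real^3 \<Rightarrow> real^3 \<Rightarrow> real^3" where
  "altitude P X Y Z = perp_to_line Y Z P
     - (dihedral_inner Y Z P X / norm (perp_to_line Y Z X)^2) *\<^sub>R perp_to_line Y Z X"

lemma altitude_orthogonal:
  shows "altitude P X Y Z \<bullet> (X - Y) = 0" and "altitude P X Y Z \<bullet> (Z - Y) = 0"
proof -
  have "(X - Y) \<bullet> altitude P X Y Z = 0"
  proof (cases "perp_to_line Y Z X = 0")
    case True
    then show ?thesis
      using inner_perp_to_line[of X Y Z P]
      by (simp add: altitude_def dihedral_inner_def inner_diff_right)
  next
    case False
    then show ?thesis
      using inner_perp_to_line[of X Y Z P] inner_perp_to_line[of X Y Z X]
      by (simp add: altitude_def inner_diff_right dihedral_inner_self dihedral_inner_commute)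
  qed
  then show "altitude P X Y Z \<bullet> (X - Y) = 0"
    by (simp add: inner_commute)
  show "altitude P X Y Z \<bullet> (Z - Y) = 0"
    by (simp add: altitude_def inner_diff_left perp_to_line_orthogonal)
qed

lemma altitude_foot: "P - altitude P X Y Z \<in> affine hull {X, Y, Z}"
proof -
  define s where "s = dihedral_inner Y Z P X / norm (perp_to_line Y Z X)^2"
  define kP where "kP = ((P - Y) \<bullet> (Z - Y)) / ((Z - Y) \<bullet> (Z - Y))"
  define kX where "kX = ((X - Y) \<bullet> (Z - Y)) / ((Z - Y) \<bullet> (Z - Y))"
  have "P - altitude P X Y Z = Y + s *\<^sub>R (X - Y) + (kP - s * kX) *\<^sub>R (Z - Y)"
    by (simp add: altitude_def perp_to_line_eq s_def kP_def kX_def algebra_simps)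
  then show ?thesis
    by (simp add: affine_hull_3_param)
qed

lemma norm_altitude:
  "norm (altitude P X Y Z)^2 * norm (perp_to_line Y Z X)^2
     = norm (perp_to_line Y Z P)^2 * norm (perp_to_line Y Z X)^2 - (dihedral_inner Y Z P X)^2"
proof -
  define p where "p = perp_to_line Y Z P"
  define x where "x = perp_to_line Y Z X"
  define c where "c = p \<bullet> x"
  define h where "h = x \<bullet> x"
  have alt: "altitude P X Y Z = p - (c / h) *\<^sub>R x"
    by (simp add: altitude_def p_def x_def c_def h_def dihedral_inner_def power2_norm_eq_inner)
  have nalt: "norm (altitude P X Y Z)^2 = p \<bullet> p - 2 * (c / h) * c + (c / h)^2 * h"
    unfolding alt power2_norm_eq_inner
    by (simp add: inner_diff_left inner_diff_right inner_commute c_def h_def power2_eq_square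
        algebra_simps)
  have "norm (altitude P X Y Z)^2 * h = p \<bullet> p * h - c^2"
  proof (cases "h = 0")
    case True
    then show ?thesis by (simp add: c_def h_def)
  next
    case False
    then show ?thesis unfolding nalt by (simp add: field_simps power2_eq_square)
  qed
  then show ?thesis
    by (simp add: p_def x_def c_def h_def dihedral_inner_def power2_norm_eq_inner)
qed

lemma altitude_nonzero:
  assumes "distinct [P, X, Y, Z]" "\<not> affine_dependent {P, X, Y, Z}"
  shows "altitude P X Y Z \<noteq> 0"
proof
  assume "altitude P X Y Z = 0"
  moreover have "{P, X, Y, Z} - {P} = {X, Y, Z}"
    using assms(1) by auto
  ultimately have "P \<in> affine hull ({P, X, Y, Z} - {P})"
    using altitude_foot[of P X Y Z] by simp
  with assms(2) show False
    unfolding affine_dependent_def by blast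
qed

lemma tetrahedron_height_pos:
  assumes "distinct [P, X, Y, Z]" "\<not> affine_dependent {P, X, Y, Z}"
  shows "0 < norm (perp_to_line Y Z X)^2"
proof -
  have "\<not> affine_dependent {X, Y, Z}"
    using assms(2) affine_independent_subset[of "{P, X, Y, Z}" "{X, Y, Z}"] by blast
  then show ?thesis
    using perp_to_line_nonzero[of X Y Z] assms(1) by simp
qed

lemma dihedral_inner_sq_less:
  assumes "distinct [P, X, Y, Z]" "\<not> affine_dependent {P, X, Y, Z}"
  shows "(dihedral_inner Y Z P X)^2 < norm (perp_to_line Y Z P)^2 * norm (perp_to_line Y Z X)^2"
proof -
  have "0 < norm (altitude P X Y Z)^2 * norm (perp_to_line Y Z X)^2"
    using altitude_nonzero[OF assms] tetrahedron_height_pos[OF assms] by simp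
  then show ?thesis
    unfolding norm_altitude by simp
qed

lemma rel_interior_triangle:
  fixes X Y Z :: "real^3"
  assumes "\<not> affine_dependent {X, Y, Z}" "distinct [X, Y, Z]"
  shows "Q \<in> rel_interior (convex hull {X, Y, Z}) \<longleftrightarrow>
    (\<exists>a b c. 0 < a \<and> 0 < b \<and> 0 < c \<and> a + b + c = 1 \<and> Q = a *\<^sub>R X + b *\<^sub>R Y + c *\<^sub>R Z)"
proof -
  have sums: "sum u {X, Y, Z} = u X + u Y + u Z"
    "(\<Sum>v\<in>{X, Y, Z}. u v *\<^sub>R v) = u X *\<^sub>R X + u Y *\<^sub>R Y + u Z *\<^sub>R Z" for u :: "real^3 \<Rightarrow> real"
    using assms(2) by (simp_all add: algebra_simps)
  show ?thesis
    unfolding rel_interior_convex_hull_explicit[OF assms(1)] sums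
  proof safe
    fix a b c :: real
    assume "0 < a" "0 < b" "0 < c" "a + b + c = 1"
    then show "\<exists>u. (\<forall>v\<in>{X, Y, Z}. 0 < u v) \<and> u X + u Y + u Z = 1 \<and>
        u X *\<^sub>R X + u Y *\<^sub>R Y + u Z *\<^sub>R Z = a *\<^sub>R X + b *\<^sub>R Y + c *\<^sub>R Z"
      using assms(2)
      by (intro exI[of _ "\<lambda>v. if v = X then a else if v = Y then b else c"]) auto
  qed auto
qed

lemma triangle_heights_pos:
  assumes "\<not> affine_dependent {X, Y, Z}" "distinct [X, Y, Z]"
  shows "0 < norm (perp_to_line Y Z X)^2" "0 < norm (perp_to_line X Z Y)^2"
    "0 < norm (perp_to_line X Y Z)^2"
proof -
  have "{Y, X, Z} = {X, Y, Z}" "{Z, X, Y} = {X, Y, Z}" by auto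
  then show "0 < norm (perp_to_line Y Z X)^2" "0 < norm (perp_to_line X Z Y)^2"
    "0 < norm (perp_to_line X Y Z)^2"
    using perp_to_line_nonzero[of X Y Z] perp_to_line_nonzero[of Y X Z]
      perp_to_line_nonzero[of Z X Y] assms by auto
qed

lemma triangle_margins:
  assumes "Q = a *\<^sub>R X + b *\<^sub>R Y + c *\<^sub>R Z" "a + b + c = 1"
  shows "(Q - Y) \<bullet> perp_to_line Y Z X = a * norm (perp_to_line Y Z X)^2"
    and "(Q - X) \<bullet> perp_to_line X Z Y = b * norm (perp_to_line X Z Y)^2"
    and "(Q - X) \<bullet> perp_to_line X Y Z = c * norm (perp_to_line X Y Z)^2"
  using assms inner_perp_to_line_affine_coords[of Q a X b Y c Z]
    inner_perp_to_line_affine_coords[of Q b Y a X c Z]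
    inner_perp_to_line_affine_coords[of Q c Z a X b Y]
  by (simp_all add: algebra_simps)

lemma perp_to_lines_orthogonal:
  assumes "n \<bullet> (X - Y) = 0" "n \<bullet> (Z - Y) = 0"
  shows "n \<bullet> perp_to_line Y Z X = 0" "n \<bullet> perp_to_line X Z Y = 0"
    "n \<bullet> perp_to_line X Y Z = 0"
proof -
  have "n \<bullet> (Y - X) = 0" "n \<bullet> (Z - X) = 0"
    using assms by (simp_all add: inner_diff_right)
  then show "n \<bullet> perp_to_line Y Z X = 0" "n \<bullet> perp_to_line X Z Y = 0"
    "n \<bullet> perp_to_line X Y Z = 0"
    using assms by (simp_all add: inner_perp_to_line_eq_0)
qed

lemma rel_interior_triangle_iff:
  assumes "\<not> affine_dependent {X, Y, Z}" "distinct [X, Y, Z]" "Q \<in> affine hull {X, Y, Z}"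
  shows "Q \<in> rel_interior (convex hull {X, Y, Z}) \<longleftrightarrow>
    0 < (Q - Y) \<bullet> perp_to_line Y Z X \<and> 0 < (Q - X) \<bullet> perp_to_line X Z Y \<and>
    0 < (Q - X) \<bullet> perp_to_line X Y Z"
proof -
  note heights = triangle_heights_pos[OF assms(1,2)]
  obtain a b c where abc: "Q = a *\<^sub>R X + b *\<^sub>R Y + c *\<^sub>R Z" "a + b + c = 1"
    using assms(3) unfolding affine_hull_3 by blast
  show ?thesis
  proof
    assume "Q \<in> rel_interior (convex hull {X, Y, Z})"
    then obtain a' b' c' where "0 < a'" "0 < b'" "0 < c'"
      and Q: "Q = a' *\<^sub>R X + b' *\<^sub>R Y + c' *\<^sub>R Z" "a' + b' + c' = 1"
      unfolding rel_interior_triangle[OF assms(1,2)] by blast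
    then show "0 < (Q - Y) \<bullet> perp_to_line Y Z X \<and> 0 < (Q - X) \<bullet> perp_to_line X Z Y \<and>
        0 < (Q - X) \<bullet> perp_to_line X Y Z"
      using triangle_margins[OF Q] heights by simp
  next
    assume "0 < (Q - Y) \<bullet> perp_to_line Y Z X \<and> 0 < (Q - X) \<bullet> perp_to_line X Z Y \<and>
        0 < (Q - X) \<bullet> perp_to_line X Y Z"
    then have "0 < a" "0 < b" "0 < c"
      using triangle_margins[OF abc] heights by (auto simp: zero_less_mult_iff)
    then show "Q \<in> rel_interior (convex hull {X, Y, Z})"
      unfolding rel_interior_triangle[OF assms(1,2)] using abc by blast
  qed
qed

lemma infdist_orthogonal:
  fixes V Q :: "'a::real_inner"
  assumes "Q \<in> A" "\<And>W. W \<in> A \<Longrightarrow> (V - Q) \<bullet> (W - Q) = 0"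
  shows "infdist V A = dist V Q"
proof (rule antisym)
  show "infdist V A \<le> dist V Q"
    using assms(1) by (rule infdist_le)
  have nonempty: "A \<noteq> {}"
    using assms(1) by blast
  have closest: "dist V Q \<le> dist V W" if "W \<in> A" for W
  proof -
    have "V - W = (V - Q) - (W - Q)" by simp
    then have "(V - W) \<bullet> (V - W) = (V - Q) \<bullet> (V - Q) + (W - Q) \<bullet> (W - Q)"
      using assms(2)[OF that] by (simp add: inner_diff_left inner_diff_right inner_commute)
    then show ?thesis
      by (simp add: dist_norm norm_le)
  qed
  show "dist V Q \<le> infdist V A"
    unfolding infdist_notempty[OF nonempty] by (intro cINF_greatest nonempty closest)
qed

lemma inner_perp_to_line_barycentric:
  assumes "G = lP *\<^sub>R P + lX *\<^sub>R X + lY *\<^sub>R Y + lZ *\<^sub>R Z" "lP + lX + lY + lZ = 1"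
  shows "(G - Y) \<bullet> perp_to_line Y Z X
    = lX * norm (perp_to_line Y Z X)^2 + lP * dihedral_inner Y Z P X"
proof -
  have "G - Y = lP *\<^sub>R (P - Y) + lX *\<^sub>R (X - Y) + lZ *\<^sub>R (Z - Y)"
    using assms by (simp add: algebra_simps flip: scaleR_add_left)
  moreover have "(Z - Y) \<bullet> perp_to_line Y Z X = 0"
    by (metis inner_commute perp_to_line_orthogonal)
  ultimately show ?thesis
    by (simp add: inner_add_left inner_perp_to_line dihedral_inner_self)
qed

lemma foot_on_face:
  assumes "G = lP *\<^sub>R P + lX *\<^sub>R X + lY *\<^sub>R Y + lZ *\<^sub>R Z" "lP + lX + lY + lZ = 1"
  shows "G - lP *\<^sub>R altitude P X Y Z \<in> affine hull {X, Y, Z}"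
proof -
  obtain a b c where abc: "a + b + c = 1"
    and foot: "P - altitude P X Y Z = a *\<^sub>R X + b *\<^sub>R Y + c *\<^sub>R Z"
    using altitude_foot[of P X Y Z] unfolding affine_hull_3 by blast
  have "G - lP *\<^sub>R altitude P X Y Z
      = lP *\<^sub>R (P - altitude P X Y Z) + lX *\<^sub>R X + lY *\<^sub>R Y + lZ *\<^sub>R Z"
    using assms(1) by (simp add: algebra_simps)
  also have "\<dots> = (lP * a + lX) *\<^sub>R X + (lP * b + lY) *\<^sub>R Y + (lP * c + lZ) *\<^sub>R Z"
    unfolding foot by (simp add: algebra_simps)
  finally have "G - lP *\<^sub>R altitude P X Y Z
      = (lP * a + lX) *\<^sub>R X + (lP * b + lY) *\<^sub>R Y + (lP * c + lZ) *\<^sub>R Z" .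
  moreover have "(lP * a + lX) + (lP * b + lY) + (lP * c + lZ) = lP * (a + b + c) + (lX + lY + lZ)"
    by (simp add: algebra_simps)
  ultimately show ?thesis
    using assms(2) abc unfolding affine_hull_3 by force
qed

section \<open>Equilibria on a face of a tetrahedron\<close>

lemma supporting_point_is_foot:
  fixes G Q X Y Z :: "'a::real_inner"
  assumes Q: "Q = a *\<^sub>R X + b *\<^sub>R Y + c *\<^sub>R Z" "a + b + c = 1"
    and pos: "0 < a" "0 < b" "0 < c"
    and supp: "\<And>V. V \<in> {X, Y, Z} \<Longrightarrow> (V - Q) \<bullet> (Q - G) \<le> 0"
  shows "(G - Q) \<bullet> (X - Y) = 0" "(G - Q) \<bullet> (Z - Y) = 0"
proof -
  have "a *\<^sub>R (X - Q) + b *\<^sub>R (Y - Q) + c *\<^sub>R (Z - Q)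
      = (a *\<^sub>R X + b *\<^sub>R Y + c *\<^sub>R Z) - (a + b + c) *\<^sub>R Q"
    by (simp add: algebra_simps)
  then have "(a *\<^sub>R (X - Q) + b *\<^sub>R (Y - Q) + c *\<^sub>R (Z - Q)) \<bullet> (Q - G) = 0"
    using Q by simp
  then have "a * ((X - Q) \<bullet> (Q - G)) + b * ((Y - Q) \<bullet> (Q - G)) + c * ((Z - Q) \<bullet> (Q - G)) = 0"
    by (simp only: inner_add_left inner_scaleR_left)
  moreover have "a * ((X - Q) \<bullet> (Q - G)) \<le> 0" "b * ((Y - Q) \<bullet> (Q - G)) \<le> 0"
    "c * ((Z - Q) \<bullet> (Q - G)) \<le> 0"
    using pos supp by (simp_all add: mult_nonneg_nonpos)
  ultimately have "(X - Q) \<bullet> (Q - G) = 0" "(Y - Q) \<bullet> (Q - G) = 0" "(Z - Q) \<bullet> (Q - G) = 0"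
    using pos by (auto simp: add_nonpos_eq_0_iff)
  then show "(G - Q) \<bullet> (X - Y) = 0" "(G - Q) \<bullet> (Z - Y) = 0"
    by (simp_all add: inner_diff_left inner_diff_right inner_commute algebra_simps)
qed

lemma foot_supports_tetrahedron:
  assumes tetra: "distinct [P, X, Y, Z]" "\<not> affine_dependent {P, X, Y, Z}"
    and G: "G = lP *\<^sub>R P + lX *\<^sub>R X + lY *\<^sub>R Y + lZ *\<^sub>R Z" "lP + lX + lY + lZ = 1" "0 < lP"
    and "G - lP *\<^sub>R altitude P X Y Z \<in> convex hull {P, X, Y, Z}"
  shows "perp_plane_supports (convex hull {P, X, Y, Z}) G (G - lP *\<^sub>R altitude P X Y Z)"
proof -
  define N where "N = altitude P X Y Z"
  define Q where "Q = G - lP *\<^sub>R N"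
  have Q_plane: "Q \<in> affine hull {X, Y, Z}"
    unfolding Q_def N_def by (rule foot_on_face[OF G(1,2)])
  have N_orth: "N \<bullet> (X - Y) = 0" "N \<bullet> (Z - Y) = 0"
    unfolding N_def by (rule altitude_orthogonal)+
  have in_plane: "N \<bullet> (V - Q) = 0" if "V \<in> affine hull {X, Y, Z}" for V
  proof -
    have "V - Q = (V - Y) - (Q - Y)" by simp
    then show ?thesis
      using orthogonal_affine_hull_3[OF N_orth that] orthogonal_affine_hull_3[OF N_orth Q_plane]
      by (simp add: inner_diff_right)
  qed
  have "0 < N \<bullet> N"
    using altitude_nonzero[OF tetra] by (simp add: N_def)
  moreover have "N \<bullet> ((P - N) - Q) = 0"
    using in_plane altitude_foot[of P X Y Z] by (simp add: N_def)
  ultimately have "N \<bullet> Q \<le> N \<bullet> P"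
    by (simp only: inner_diff_right)
  then have "{P, X, Y, Z} \<subseteq> {V. N \<bullet> Q \<le> N \<bullet> V}"
    using in_plane[of X] in_plane[of Y] in_plane[of Z] by (auto simp: hull_inc inner_diff_right)
  then have halfspace: "convex hull {P, X, Y, Z} \<subseteq> {V. N \<bullet> Q \<le> N \<bullet> V}"
    by (intro hull_minimal convex_halfspace_ge)
  have "(V - Q) \<bullet> (Q - G) \<le> 0" if "V \<in> convex hull {P, X, Y, Z}" for V
  proof -
    have "0 \<le> (V - Q) \<bullet> N"
      using that halfspace by (auto simp: inner_diff_left inner_commute[of V N] inner_commute[of Q N])
    moreover have "Q - G = - lP *\<^sub>R N"
      by (simp add: Q_def)
    ultimately show ?thesis
      using G(3) by simp
  qed
  moreover have "Q \<noteq> G"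
    using G(3) altitude_nonzero[OF tetra] by (simp add: Q_def N_def)
  ultimately show ?thesis
    using assms(6) unfolding perp_plane_supports_def Q_def N_def by blast
qed

text \<open>The three inequalities say that the foot of the perpendicular from \<open>G\<close> to the plane
  \<open>XYZ\<close> lies strictly inside the triangle.\<close>

lemma equilibrium_on_face_iff:
  assumes tetra: "distinct [P, X, Y, Z]" "\<not> affine_dependent {P, X, Y, Z}"
    and G: "G = lP *\<^sub>R P + lX *\<^sub>R X + lY *\<^sub>R Y + lZ *\<^sub>R Z" "lP + lX + lY + lZ = 1" "0 < lP"
  shows "equilibrium_on (convex hull {P, X, Y, Z}) G (convex hull {X, Y, Z}) \<longleftrightarrow>
    0 < (G - Y) \<bullet> perp_to_line Y Z X \<and> 0 < (G - X) \<bullet> perp_to_line X Z Y \<and>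
    0 < (G - X) \<bullet> perp_to_line X Y Z"
    (is "equilibrium_on ?T G ?F \<longleftrightarrow> ?margins G")
proof -
  have tri: "\<not> affine_dependent {X, Y, Z}" "distinct [X, Y, Z]"
    using tetra affine_independent_subset[of "{P, X, Y, Z}" "{X, Y, Z}"] by auto
  have same_margins: "?margins G \<longleftrightarrow> ?margins Q"
    if "(G - Q) \<bullet> (X - Y) = 0" "(G - Q) \<bullet> (Z - Y) = 0" for Q
  proof -
    have "G - Y = (G - Q) + (Q - Y)" "G - X = (G - Q) + (Q - X)" by simp_all
    then show ?thesis
      using perp_to_lines_orthogonal[OF that] by (simp only: inner_add_left) simp
  qed
  show ?thesis
  proof
    assume "equilibrium_on ?T G ?F"
    then obtain Q where "Q \<in> rel_interior ?F" and supp: "\<forall>V\<in>?T. (V - Q) \<bullet> (Q - G) \<le> 0"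
      unfolding equilibrium_on_def perp_plane_supports_def by blast
    then obtain a b c where pos: "0 < a" "0 < b" "0 < c"
      and Q: "Q = a *\<^sub>R X + b *\<^sub>R Y + c *\<^sub>R Z" "a + b + c = 1"
      unfolding rel_interior_triangle[OF tri] by blast
    have "(V - Q) \<bullet> (Q - G) \<le> 0" if "V \<in> {X, Y, Z}" for V
      using supp that by (auto intro: hull_inc)
    note foot = supporting_point_is_foot[OF Q pos this]
    have "?margins Q"
      using \<open>Q \<in> rel_interior ?F\<close> rel_interior_triangle_iff[OF tri] Q
      unfolding affine_hull_3 by blast
    then show "?margins G"
      using same_margins[OF foot] by blast
  next
    assume "?margins G"
    define Q where "Q = G - lP *\<^sub>R altitude P X Y Z"
    have "(G - Q) \<bullet> (X - Y) = 0" "(G - Q) \<bullet> (Z - Y) = 0"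
      using altitude_orthogonal[of P X Y Z] by (simp_all add: Q_def)
    then have "Q \<in> rel_interior ?F"
      using \<open>?margins G\<close> same_margins rel_interior_triangle_iff[OF tri foot_on_face[OF G(1,2)]]
      unfolding Q_def by blast
    moreover have "Q \<in> ?T"
      using \<open>Q \<in> rel_interior ?F\<close> rel_interior_subset hull_mono[of "{X, Y, Z}" "{P, X, Y, Z}"]
      by blast
    ultimately show "equilibrium_on ?T G ?F"
      using foot_supports_tetrahedron[OF tetra G] unfolding equilibrium_on_def Q_def by blast
  qed
qed

lemma no_face_with_three_obtuse_edges:
  assumes tetra: "distinct [P, X, Y, Z]" "\<not> affine_dependent {P, X, Y, Z}"
  shows "\<not> (dihedral_inner Y Z P X < 0 \<and> dihedral_inner X Z P Y < 0 \<and> dihedral_inner X Y P Z < 0)"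
proof
  assume obtuse: "dihedral_inner Y Z P X < 0 \<and> dihedral_inner X Z P Y < 0 \<and> dihedral_inner X Y P Z < 0"
  have tri: "\<not> affine_dependent {X, Y, Z}" "distinct [X, Y, Z]"
    using tetra affine_independent_subset[of "{P, X, Y, Z}" "{X, Y, Z}"] by auto
  define N where "N = altitude P X Y Z"
  obtain a b c where foot: "P - N = a *\<^sub>R X + b *\<^sub>R Y + c *\<^sub>R Z" "a + b + c = 1"
    using altitude_foot[of P X Y Z] unfolding N_def affine_hull_3 by blast
  note N_perp = perp_to_lines_orthogonal[OF altitude_orthogonal[of P X Y Z, folded N_def]]
  have shift: "(P - N - W) \<bullet> u = (P - W) \<bullet> u" if "N \<bullet> u = 0" for W u
  proof -
    have "P - N - W = (P - W) - N" by simp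
    then show ?thesis
      using that by (simp add: inner_diff_left inner_commute[of N])
  qed
  have "a * norm (perp_to_line Y Z X)^2 = dihedral_inner Y Z P X"
    "b * norm (perp_to_line X Z Y)^2 = dihedral_inner X Z P Y"
    "c * norm (perp_to_line X Y Z)^2 = dihedral_inner X Y P Z"
    unfolding triangle_margins[OF foot, symmetric] shift[OF N_perp(1)] shift[OF N_perp(2)]
      shift[OF N_perp(3)]
    by (rule inner_perp_to_line)+
  moreover have neg: "t < 0" if "t * h = d" "d < 0" "0 < h" for t h d :: real
    using that by (auto simp: mult_less_0_iff)
  ultimately have "a < 0" "b < 0" "c < 0"
    using obtuse triangle_heights_pos[OF tri] by (blast intro: neg)+
  with foot(2) show False by simp
qed

lemma infdist_face_plane:
  assumes "G = lP *\<^sub>R P + lX *\<^sub>R X + lY *\<^sub>R Y + lZ *\<^sub>R Z" "lP + lX + lY + lZ = 1"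
  shows "infdist G (affine hull {X, Y, Z}) = \<bar>lP\<bar> * norm (altitude P X Y Z)"
proof -
  define N where "N = altitude P X Y Z"
  define Q where "Q = G - lP *\<^sub>R N"
  have Q_plane: "Q \<in> affine hull {X, Y, Z}"
    unfolding Q_def N_def by (rule foot_on_face[OF assms])
  have N_orth: "N \<bullet> (X - Y) = 0" "N \<bullet> (Z - Y) = 0"
    unfolding N_def by (rule altitude_orthogonal)+
  have "(G - Q) \<bullet> (W - Q) = 0" if "W \<in> affine hull {X, Y, Z}" for W
  proof -
    have "W - Q = (W - Y) - (Q - Y)" by simp
    then have "N \<bullet> (W - Q) = 0"
      using orthogonal_affine_hull_3[OF N_orth that] orthogonal_affine_hull_3[OF N_orth Q_plane]
      by (simp only: inner_diff_right)
    moreover have "G - Q = lP *\<^sub>R N"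
      by (simp add: Q_def)
    ultimately show ?thesis
      by simp
  qed
  then have "infdist G (affine hull {X, Y, Z}) = dist G Q"
    by (rule infdist_orthogonal[OF Q_plane])
  then show ?thesis
    by (simp add: Q_def N_def dist_norm)
qed

lemma nonpositive_margin_weights:
  fixes lP lX hP hX c :: real
  assumes "0 < lP" "0 < lX" "0 < hX" "c^2 < hP * hX" "lX * hX + lP * c \<le> 0"
  shows "c < 0" "lX^2 * hX < lP^2 * hP"
proof -
  have "0 < lX * hX"
    using assms(2,3) by simp
  moreover have margin: "lX * hX \<le> - (lP * c)"
    using assms(5) by linarith
  ultimately have "lP * c < 0"
    by linarith
  then show "c < 0"
    using assms(1) by (auto simp: mult_less_0_iff)
  have "(lX * hX)^2 \<le> (lP * c)^2"
    using margin \<open>0 < lX * hX\<close> by (intro abs_le_square_iff[THEN iffD1]) auto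
  also have "\<dots> < lP^2 * (hP * hX)"
    using assms(1,4) by (simp add: power_mult_distrib)
  finally show "lX^2 * hX < lP^2 * hP"
    using assms(3) by (simp add: power2_eq_square algebra_simps)
qed

lemma obtuse_edge_closer_face:
  assumes tetra: "distinct [P, X, Y, Z]" "\<not> affine_dependent {P, X, Y, Z}"
    and G: "G = lP *\<^sub>R P + lX *\<^sub>R X + lY *\<^sub>R Y + lZ *\<^sub>R Z" "lP + lX + lY + lZ = 1"
    and pos: "0 < lP" "0 < lX"
    and margin: "lX * norm (perp_to_line Y Z X)^2 + lP * dihedral_inner Y Z P X \<le> 0"
  shows "dihedral_inner Y Z P X < 0"
    and "infdist G (affine hull {P, Y, Z}) < infdist G (affine hull {X, Y, Z})"
proof -
  define c where "c = dihedral_inner Y Z P X"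
  define hP where "hP = norm (perp_to_line Y Z P)^2"
  define hX where "hX = norm (perp_to_line Y Z X)^2"
  have tetra': "distinct [X, P, Y, Z]" "\<not> affine_dependent {X, P, Y, Z}"
    using tetra by (auto simp: insert_commute)
  have hX: "0 < hX" and hP: "0 < hP"
    unfolding hX_def hP_def using tetrahedron_height_pos[OF tetra] tetrahedron_height_pos[OF tetra'] .
  have sq: "c^2 < hP * hX"
    using dihedral_inner_sq_less[OF tetra] by (simp add: c_def hP_def hX_def)
  define \<Delta> where "\<Delta> = hP * hX - c^2"
  have "0 < \<Delta>"
    using sq by (simp add: \<Delta>_def)
  have altP: "norm (altitude P X Y Z)^2 * hX = \<Delta>"
    using norm_altitude[of P X Y Z] by (simp add: \<Delta>_def c_def hP_def hX_def)
  have altX: "norm (altitude X P Y Z)^2 * hP = \<Delta>"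
    using norm_altitude[of X P Y Z] by (simp add: \<Delta>_def c_def hP_def hX_def dihedral_inner_commute)
  note weights = nonpositive_margin_weights[OF pos hX sq margin[folded c_def hX_def]]
  show "c < 0"
    by (rule weights(1))
  have "(lX * norm (altitude X P Y Z))^2 * (hP * hX) = (lX^2 * hX) * \<Delta>"
    using altX by (simp add: power_mult_distrib algebra_simps)
  also have "\<dots> < (lP^2 * hP) * \<Delta>"
    using weights(2) \<open>0 < \<Delta>\<close> by simp
  also have "\<dots> = (lP * norm (altitude P X Y Z))^2 * (hP * hX)"
    using altP by (simp add: power_mult_distrib algebra_simps)
  finally have "(lX * norm (altitude X P Y Z))^2 < (lP * norm (altitude P X Y Z))^2"
    using hP hX by simp
  moreover have "infdist G (affine hull {P, Y, Z}) = lX * norm (altitude X P Y Z)"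
    using infdist_face_plane[of G lX X lP P lY Y lZ Z] G pos by (simp add: algebra_simps)
  moreover have "infdist G (affine hull {X, Y, Z}) = lP * norm (altitude P X Y Z)"
    using infdist_face_plane[OF G] pos by simp
  ultimately show "infdist G (affine hull {P, Y, Z}) < infdist G (affine hull {X, Y, Z})"
    using pos by (simp add: power_less_imp_less_base)
qed

section \<open>Tetrahedra as vertex sets\<close>

lemma tetrahedron_labelling:
  assumes "card S = 4" "v \<in> S"
  obtains X Y Z where "S = {v, X, Y, Z}" "distinct [v, X, Y, Z]"
proof -
  have "card (S - {v}) = 3"
    using assms by (simp add: card_Diff_singleton)
  then obtain X Y Z where "S - {v} = {X, Y, Z}" "X \<noteq> Y" "Y \<noteq> Z" "X \<noteq> Z"
    unfolding card_3_iff by blast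
  moreover have "S = insert v (S - {v})"
    using assms(2) by blast
  ultimately show ?thesis
    using that by (metis Diff_iff distinct_length_2_or_more distinct_singleton insertCI singletonI)
qed

lemma facet3_simplex_iff:
  fixes S :: "(real^3) set"
  assumes "\<not> affine_dependent S" "card S = 4"
  shows "facet3 F (convex hull S) \<longleftrightarrow> (\<exists>v\<in>S. F = convex hull (S - {v}))"
proof -
  have "aff_dim (convex hull S) = 3"
    using aff_dim_affine_independent[OF assms(1)] assms(2) by (simp add: aff_dim_convex_hull)
  then have "facet3 F (convex hull S) \<longleftrightarrow> F facet_of (convex hull S)"
    unfolding facet3_def facet_of_def by auto
  then show ?thesis
    using facet_of_convex_hull_affine_independent_alt[OF assms(1)] assms(2) by auto
qed

lemma convex_hull_delete_inj:
  assumes "\<not> affine_dependent S" "u \<in> S" "v \<in> S"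
    and "convex hull (S - {u}) = convex hull (S - {v})"
  shows "u = v"
proof (rule ccontr)
  assume "u \<noteq> v"
  then have "u \<in> convex hull (S - {v})"
    using assms(2) by (simp add: hull_inc)
  then have "u \<in> affine hull (S - {u})"
    using assms(4) convex_hull_subset_affine_hull by blast
  with assms(1,2) show False
    unfolding affine_dependent_def by blast
qed

lemma monostable_simplex_iff:
  fixes S :: "(real^3) set"
  assumes "\<not> affine_dependent S" "card S = 4"
  shows "monostable (convex hull S) G \<longleftrightarrow>
    (\<exists>!v. v \<in> S \<and> equilibrium_on (convex hull S) G (convex hull (S - {v})))"
proof -
  let ?E = "equilibrium_on (convex hull S) G"
  have "monostable (convex hull S) G \<longleftrightarrow> (\<exists>!F. (\<exists>v\<in>S. F = convex hull (S - {v})) \<and> ?E F)"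
    unfolding monostable_def stable_equilibrium_on_def facet3_simplex_iff[OF assms] ..
  also have "\<dots> \<longleftrightarrow> (\<exists>!v. v \<in> S \<and> ?E (convex hull (S - {v})))"
  proof
    assume "\<exists>!F. (\<exists>v\<in>S. F = convex hull (S - {v})) \<and> ?E F"
    then obtain F where F: "(\<exists>v\<in>S. F = convex hull (S - {v})) \<and> ?E F"
      and unique: "\<forall>F'. (\<exists>v\<in>S. F' = convex hull (S - {v})) \<and> ?E F' \<longrightarrow> F' = F"
      by (rule ex1E)
    then obtain v where "v \<in> S" "F = convex hull (S - {v})"
      by blast
    show "\<exists>!v. v \<in> S \<and> ?E (convex hull (S - {v}))"
    proof (rule ex1I[of _ v])
      show "v \<in> S \<and> ?E (convex hull (S - {v}))"
        using F \<open>v \<in> S\<close> \<open>F = _\<close> by simp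
      show "u = v" if "u \<in> S \<and> ?E (convex hull (S - {u}))" for u
        using that unique \<open>v \<in> S\<close> \<open>F = _\<close> convex_hull_delete_inj[OF assms(1)] by blast
    qed
  next
    assume "\<exists>!v. v \<in> S \<and> ?E (convex hull (S - {v}))"
    then obtain v where "v \<in> S" "?E (convex hull (S - {v}))"
      and unique: "\<And>u. u \<in> S \<Longrightarrow> ?E (convex hull (S - {u})) \<Longrightarrow> u = v"
      by blast
    then show "\<exists>!F. (\<exists>v\<in>S. F = convex hull (S - {v})) \<and> ?E F"
      by (intro ex1I[of _ "convex hull (S - {v})"]) blast+
  qed
  finally show ?thesis .
qed

text \<open>Faces of a tetrahedron \<open>S\<close> are indexed by their opposite vertices. The faces opposite
  \<open>v\<close> and \<open>w\<close> share the edge \<open>yz\<close>, where \<open>S = {v, w, y, z}\<close>; \<open>meet_obtusely S v w\<close> says that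
  the dihedral angle at this edge is obtuse.\<close>

definition meet_obtusely :: "(real^3) set \<Rightarrow> real^3 \<Rightarrow> real^3 \<Rightarrow> bool" where
  "meet_obtusely S v w \<longleftrightarrow>
     (\<exists>y z. S = {v, w, y, z} \<and> distinct [v, w, y, z] \<and> dihedral_inner y z v w < 0)"

lemma meet_obtusely_iff:
  assumes "S = {v, w, y, z}" "distinct [v, w, y, z]"
  shows "meet_obtusely S v w \<longleftrightarrow> dihedral_inner y z v w < 0"
proof
  assume "meet_obtusely S v w"
  then obtain y' z' where S: "S = {v, w, y', z'}" "distinct [v, w, y', z']"
    and "dihedral_inner y' z' v w < 0"
    unfolding meet_obtusely_def by blast
  moreover have "{y', z'} = {y, z}"
  proof -
    have "S - {v, w} = {y, z}" "S - {v, w} = {y', z'}"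
      using assms S by auto
    then show ?thesis by simp
  qed
  ultimately show "dihedral_inner y z v w < 0"
    by (auto simp: doubleton_eq_iff dihedral_inner_edge_commute)
qed (use assms in \<open>auto simp: meet_obtusely_def\<close>)

lemma meet_obtusely_sym:
  assumes "meet_obtusely S v w"
  shows "meet_obtusely S w v"
proof -
  obtain y z where "S = {v, w, y, z}" "distinct [v, w, y, z]" "dihedral_inner y z v w < 0"
    using assms unfolding meet_obtusely_def by blast
  then have "S = {w, v, y, z}" "distinct [w, v, y, z]" "dihedral_inner y z w v < 0"
    by (auto simp: insert_commute dihedral_inner_commute)
  then show ?thesis
    unfolding meet_obtusely_def by blast
qed

lemma barycentric_labelling:
  assumes "S = {P, X, Y, Z}" "distinct [P, X, Y, Z]" "sum l S = 1" "G = (\<Sum>v\<in>S. l v *\<^sub>R v)"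
  shows "G = l P *\<^sub>R P + l X *\<^sub>R X + l Y *\<^sub>R Y + l Z *\<^sub>R Z" "l P + l X + l Y + l Z = 1"
  using assms by (simp_all add: algebra_simps)

lemma equilibrium_on_simplex_face_iff:
  fixes S :: "(real^3) set"
  assumes S: "\<not> affine_dependent S" "card S = 4" "p \<in> S"
    and l: "\<forall>v\<in>S. 0 < l v" "sum l S = 1" "G = (\<Sum>v\<in>S. l v *\<^sub>R v)"
  shows "equilibrium_on (convex hull S) G (convex hull (S - {p})) \<longleftrightarrow>
    (\<forall>X Y Z. S = {p, X, Y, Z} \<longrightarrow> distinct [p, X, Y, Z] \<longrightarrow>
       0 < l X * norm (perp_to_line Y Z X)^2 + l p * dihedral_inner Y Z p X)"
    (is "?eq \<longleftrightarrow> (\<forall>X Y Z. _ \<longrightarrow> _ \<longrightarrow> 0 < ?margin X Y Z)")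
proof -
  have face_iff: "?eq \<longleftrightarrow> 0 < (G - Y) \<bullet> perp_to_line Y Z X \<and> 0 < (G - X) \<bullet> perp_to_line X Z Y \<and>
      0 < (G - X) \<bullet> perp_to_line X Y Z"
    if lab: "S = {p, X, Y, Z}" "distinct [p, X, Y, Z]" for X Y Z
  proof -
    have "S - {p} = {X, Y, Z}"
      using lab by auto
    then show ?thesis
      using equilibrium_on_face_iff[OF lab(2) _ barycentric_labelling[OF lab l(2,3)]] S l lab
      by simp
  qed
  have margin: "(G - Y) \<bullet> perp_to_line Y Z X = ?margin X Y Z"
    if lab: "S = {p, X, Y, Z}" "distinct [p, X, Y, Z]" for X Y Z
    using inner_perp_to_line_barycentric[OF barycentric_labelling[OF lab l(2,3)]] by simp
  obtain X Y Z where lab: "S = {p, X, Y, Z}" "distinct [p, X, Y, Z]"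
    using tetrahedron_labelling[OF S(2,3)] by blast
  show ?thesis
  proof (intro iffI allI impI)
    fix X' Y' Z'
    assume ?eq "S = {p, X', Y', Z'}" "distinct [p, X', Y', Z']"
    then show "0 < ?margin X' Y' Z'"
      using face_iff margin by simp
  next
    assume all: "\<forall>X Y Z. S = {p, X, Y, Z} \<longrightarrow> distinct [p, X, Y, Z] \<longrightarrow> 0 < ?margin X Y Z"
    have "S = {p, Y, X, Z}" "distinct [p, Y, X, Z]" "S = {p, Z, X, Y}" "distinct [p, Z, X, Y]"
      using lab by (auto simp: insert_commute)
    then show ?eq
      using face_iff[OF lab] margin[OF lab] margin[of Y X Z] margin[of Z X Y] all lab by simp
  qed
qed

lemma face_without_equilibrium_descent:
  fixes S :: "(real^3) set"
  assumes S: "\<not> affine_dependent S" "card S = 4" "v \<in> S"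
    and l: "\<forall>v\<in>S. 0 < l v" "sum l S = 1" "G = (\<Sum>v\<in>S. l v *\<^sub>R v)"
    and no_eq: "\<not> equilibrium_on (convex hull S) G (convex hull (S - {v}))"
  shows "\<exists>w\<in>S. meet_obtusely S v w \<and>
    infdist G (affine hull (S - {w})) < infdist G (affine hull (S - {v}))"
proof -
  obtain X Y Z where lab: "S = {v, X, Y, Z}" "distinct [v, X, Y, Z]"
    and margin: "l X * norm (perp_to_line Y Z X)^2 + l v * dihedral_inner Y Z v X \<le> 0"
    using no_eq equilibrium_on_simplex_face_iff[OF S l] by (auto simp: not_less)
  have "\<not> affine_dependent {v, X, Y, Z}" "0 < l v" "0 < l X"
    using S l lab by auto
  note closer = obtuse_edge_closer_face[OF lab(2) this(1)
      barycentric_labelling[OF lab l(2,3)] this(2,3) margin]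
  have "meet_obtusely S v X"
    using closer(1) meet_obtusely_iff[OF lab] by simp
  moreover have "S - {X} = {v, Y, Z}" "S - {v} = {X, Y, Z}"
    using lab by auto
  ultimately show ?thesis
    using closer(2) lab by auto
qed

lemma face_has_non_obtuse_edge:
  fixes S :: "(real^3) set"
  assumes "\<not> affine_dependent S" "card S = 4" "v \<in> S"
  shows "\<exists>w\<in>S - {v}. \<not> meet_obtusely S v w"
proof -
  obtain X Y Z where lab: "S = {v, X, Y, Z}" "distinct [v, X, Y, Z]"
    using tetrahedron_labelling[OF assms(2,3)] by blast
  have "\<not> (dihedral_inner Y Z v X < 0 \<and> dihedral_inner X Z v Y < 0 \<and> dihedral_inner X Y v Z < 0)"
    using no_face_with_three_obtuse_edges[OF lab(2)] assms(1) lab(1) by simp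
  moreover have "S = {v, Y, X, Z}" "distinct [v, Y, X, Z]" "S = {v, Z, X, Y}" "distinct [v, Z, X, Y]"
    using lab by (auto simp: insert_commute)
  ultimately show ?thesis
    using meet_obtusely_iff[OF lab] meet_obtusely_iff[of S v Y X Z] meet_obtusely_iff[of S v Z X Y] lab
    by auto
qed

section \<open>Monostability forces an obtuse path\<close>

text \<open>The descent edges form a spanning tree on the four vertices, hence a star or a path; the
  hypothesis \<open>no_star\<close> leaves only the path.\<close>

lemma hamiltonian_path_from_descent:
  fixes d :: "'a \<Rightarrow> real"
  assumes "card S = 4" "p \<in> S"
    and sym: "\<And>v w. R v w \<Longrightarrow> R w v"
    and descent: "\<And>v. v \<in> S - {p} \<Longrightarrow> \<exists>w\<in>S. R v w \<and> d w < d v"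
    and no_star: "\<And>v. v \<in> S \<Longrightarrow> \<exists>w\<in>S - {v}. \<not> R v w"
  shows "\<exists>a b c e. S = {a, b, c, e} \<and> distinct [a, b, c, e] \<and> R a b \<and> R b c \<and> R c e"
proof -
  have sorted: ?thesis
    if lab: "S = {p, x, y, z}" "distinct [p, x, y, z]" and "d x \<le> d y" "d y \<le> d z" for x y z
  proof -
    have down: "\<exists>w\<in>{p, x, y, z}. R v w \<and> d w < d v" if "v \<in> {x, y, z}" for v
      using descent lab that by auto
    have "R x p"
      using down[of x] \<open>d x \<le> d y\<close> \<open>d y \<le> d z\<close> by auto
    moreover have "R y p \<or> R y x"
      using down[of y] \<open>d y \<le> d z\<close> by auto
    moreover have "R z p \<or> R z x \<or> R z y"
      using down[of z] by auto
    moreover have "\<not> (R p x \<and> R p y \<and> R p z)" "\<not> (R x p \<and> R x y \<and> R x z)"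
      using no_star[of p] no_star[of x] lab by auto
    ultimately have "R z x \<and> R x p \<and> R p y \<or> R x p \<and> R p y \<and> R y z \<or>
        R y x \<and> R x p \<and> R p z \<or> R p x \<and> R x y \<and> R y z"
      using sym by blast
    moreover have "S = {z, x, p, y}" "S = {x, p, y, z}" "S = {y, x, p, z}"
      using lab(1) by (simp_all add: insert_commute)
    moreover have "distinct [z, x, p, y]" "distinct [x, p, y, z]" "distinct [y, x, p, z]"
      using lab(2) by auto
    moreover have witness: ?thesis
      if "S = {a, b, c, e}" "distinct [a, b, c, e]" "R a b" "R b c" "R c e" for a b c e
      using that by blast
    ultimately show ?thesis
      using witness[of z x p y] witness[of x p y z] witness[of y x p z] witness[of p x y z] lab
      by blast
  qed
  obtain x y z where lab: "S = {p, x, y, z}" "distinct [p, x, y, z]"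
    using tetrahedron_labelling[OF assms(1,2)] by blast
  have perms: "S = {p, x, z, y}" "S = {p, y, x, z}" "S = {p, y, z, x}" "S = {p, z, x, y}"
    "S = {p, z, y, x}"
    using lab(1) by (simp_all add: insert_commute)
  have dists: "distinct [p, x, z, y]" "distinct [p, y, x, z]" "distinct [p, y, z, x]"
    "distinct [p, z, x, y]" "distinct [p, z, y, x]"
    using lab(2) by auto
  consider "d x \<le> d y" "d y \<le> d z" | "d x \<le> d z" "d z \<le> d y" | "d y \<le> d x" "d x \<le> d z"
    | "d y \<le> d z" "d z \<le> d x" | "d z \<le> d x" "d x \<le> d y" | "d z \<le> d y" "d y \<le> d x"
    by linarith
  then show ?thesis
  proof cases
    case 1
    then show ?thesis by (rule sorted[OF lab])
  next
    case 2
    then show ?thesis by (rule sorted[OF perms(1) dists(1)])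
  next
    case 3
    then show ?thesis by (rule sorted[OF perms(2) dists(2)])
  next
    case 4
    then show ?thesis by (rule sorted[OF perms(3) dists(3)])
  next
    case 5
    then show ?thesis by (rule sorted[OF perms(4) dists(4)])
  next
    case 6
    then show ?thesis by (rule sorted[OF perms(5) dists(5)])
  qed
qed

lemma monostable_imp_dual_path:
  fixes S :: "(real^3) set"
  assumes S: "\<not> affine_dependent S" "card S = 4"
    and G: "G \<in> interior (convex hull S)" "monostable (convex hull S) G"
  shows "\<exists>a b c e. S = {a, b, c, e} \<and> distinct [a, b, c, e] \<and>
    meet_obtusely S a b \<and> meet_obtusely S b c \<and> meet_obtusely S c e"
proof -
  obtain l where l: "\<forall>v\<in>S. 0 < l v" "sum l S = 1" "G = (\<Sum>v\<in>S. l v *\<^sub>R v)"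
    using G(1) interior_convex_hull_explicit_minimal[OF S(1)] S(2) by auto
  obtain p where "p \<in> S"
    and others: "\<And>v. v \<in> S - {p} \<Longrightarrow> \<not> equilibrium_on (convex hull S) G (convex hull (S - {v}))"
    using G(2) unfolding monostable_simplex_iff[OF S] by blast
  show ?thesis
  proof (rule hamiltonian_path_from_descent[OF S(2) \<open>p \<in> S\<close>])
    show "\<exists>w\<in>S. meet_obtusely S v w \<and>
        infdist G (affine hull (S - {w})) < infdist G (affine hull (S - {v}))"
      if "v \<in> S - {p}" for v
      using face_without_equilibrium_descent[OF S _ l] others[OF that] that by blast
  qed (use meet_obtusely_sym face_has_non_obtuse_edge[OF S] in auto)
qed

section \<open>Monostable centres along an obtuse path\<close>

definition dihedral_ratio_bound :: "real \<Rightarrow> real^3 \<Rightarrow> real^3 \<Rightarrow> real^3 \<Rightarrow> real^3 \<Rightarrow> bool" where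
  "dihedral_ratio_bound M P X Y Z \<longleftrightarrow>
     \<bar>dihedral_inner Y Z P X\<bar> < M * norm (perp_to_line Y Z X)^2 \<and>
     (dihedral_inner Y Z P X < 0 \<longrightarrow> norm (perp_to_line Y Z X)^2 \<le> M * - dihedral_inner Y Z P X)"

definition bounds_dihedral_ratios :: "(real^3) set \<Rightarrow> real \<Rightarrow> bool" where
  "bounds_dihedral_ratios S M \<longleftrightarrow>
     (\<forall>P X Y Z. S = {P, X, Y, Z} \<longrightarrow> distinct [P, X, Y, Z] \<longrightarrow> dihedral_ratio_bound M P X Y Z)"

lemma eventually_dihedral_ratio_bound:
  assumes "distinct [P, X, Y, Z]" "\<not> affine_dependent {P, X, Y, Z}"
  shows "eventually (\<lambda>M. dihedral_ratio_bound M P X Y Z) at_top"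
proof -
  define c where "c = dihedral_inner Y Z P X"
  define h where "h = norm (perp_to_line Y Z X)^2"
  have "0 < h"
    using tetrahedron_height_pos[OF assms] by (simp add: h_def)
  have "eventually (\<lambda>M. \<bar>c\<bar> / h < M) at_top" "eventually (\<lambda>M. h / - c \<le> M \<or> 0 \<le> c) at_top"
    by (auto intro: eventually_gt_at_top eventually_mono[OF eventually_ge_at_top])
  then show ?thesis
  proof (rule eventually_elim2)
    fix M
    assume M: "\<bar>c\<bar> / h < M" "h / - c \<le> M \<or> 0 \<le> c"
    have "\<bar>c\<bar> < M * h"
      using M(1) \<open>0 < h\<close> by (simp add: divide_less_eq)
    moreover have "h \<le> M * - c" if "c < 0"
    proof -
      have "0 < - c" "h / - c \<le> M"
        using M(2) that by auto
      then show ?thesis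
        by (rule pos_divide_le_eq[THEN iffD1])
    qed
    ultimately show "dihedral_ratio_bound M P X Y Z"
      unfolding dihedral_ratio_bound_def c_def h_def by blast
  qed
qed

lemma bounds_dihedral_ratios_exists:
  fixes S :: "(real^3) set"
  assumes "\<not> affine_dependent S" "card S = 4"
  shows "\<exists>M\<ge>1. bounds_dihedral_ratios S M"
proof -
  define bounded where "bounded M \<longleftrightarrow> (\<forall>P\<in>S. \<forall>X\<in>S. \<forall>Y\<in>S. \<forall>Z\<in>S.
    S = {P, X, Y, Z} \<longrightarrow> distinct [P, X, Y, Z] \<longrightarrow> dihedral_ratio_bound M P X Y Z)" for M
  have "eventually (\<lambda>M. S = {P, X, Y, Z} \<longrightarrow> distinct [P, X, Y, Z] \<longrightarrow>
      dihedral_ratio_bound M P X Y Z) at_top" for P X Y Z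
  proof (cases "S = {P, X, Y, Z} \<and> distinct [P, X, Y, Z]")
    case True
    then show ?thesis
      using eventually_dihedral_ratio_bound[of P X Y Z] assms(1) by (auto elim: eventually_mono)
  next
    case False
    then show ?thesis
      by (intro always_eventually) blast
  qed
  moreover have "finite S"
    using assms(2) by (simp add: card_ge_0_finite)
  ultimately have "eventually bounded at_top"
    unfolding bounded_def by (simp add: eventually_ball_finite_distrib)
  then have "eventually (\<lambda>M. 1 \<le> M \<and> bounded M) at_top"
    by (simp add: eventually_conj_iff eventually_ge_at_top)
  then obtain M where "1 \<le> M" "bounded M"
    unfolding eventually_at_top_linorder by blast
  then show ?thesis
    unfolding bounds_dihedral_ratios_def bounded_def by blast
qed

lemma monostable_of_weights:
  fixes S :: "(real^3) set"
  assumes S: "\<not> affine_dependent S" "card S = 4" "p \<in> S"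
    and M: "bounds_dihedral_ratios S M"
    and w: "\<forall>v\<in>S. 0 < w v"
    and light: "\<forall>v\<in>S - {p}. M * w p \<le> w v"
    and heavy: "\<forall>v\<in>S - {p}. \<exists>u\<in>S. meet_obtusely S v u \<and> M * w u \<le> w v"
  shows "\<exists>G\<in>interior (convex hull S). monostable (convex hull S) G \<and>
    stable_equilibrium_on (convex hull S) G (convex hull (S - {p}))"
proof -
  have "finite S" "S \<noteq> {}"
    using S by (auto simp: card_ge_0_finite)
  then have W: "0 < sum w S"
    using w by (simp add: sum_pos)
  define l where "l v = w v / sum w S" for v
  define G where "G = (\<Sum>v\<in>S. l v *\<^sub>R v)"
  have l: "\<forall>v\<in>S. 0 < l v" "sum l S = 1" "G = (\<Sum>v\<in>S. l v *\<^sub>R v)"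
    using w W by (simp_all add: l_def G_def flip: sum_divide_distrib)
  have scaled: "M * l u \<le> l v \<longleftrightarrow> M * w u \<le> w v" for u v
    using W by (simp add: l_def divide_le_eq)
  have "G \<in> interior (convex hull S)"
    using interior_convex_hull_explicit_minimal[OF S(1)] S(2) l by auto
  have eq_p: "equilibrium_on (convex hull S) G (convex hull (S - {p}))"
    unfolding equilibrium_on_simplex_face_iff[OF S l]
  proof (intro allI impI)
    fix X Y Z
    assume lab: "S = {p, X, Y, Z}" "distinct [p, X, Y, Z]"
    define c where "c = dihedral_inner Y Z p X"
    define h where "h = norm (perp_to_line Y Z X)^2"
    have "\<bar>c\<bar> < M * h"
      using M lab unfolding bounds_dihedral_ratios_def dihedral_ratio_bound_def c_def h_def by blast
    moreover have "M * l p \<le> l X" "0 < l p" "0 \<le> h"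
      using light l(1) lab scaled by (auto simp: h_def)
    ultimately have "0 < l p * (M * h + c)" "M * l p * h \<le> l X * h"
      by (auto intro: mult_right_mono)
    then show "0 < l X * norm (perp_to_line Y Z X)^2 + l p * dihedral_inner Y Z p X"
      by (simp add: c_def[symmetric] h_def[symmetric] algebra_simps)
  qed
  have no_eq: "\<not> equilibrium_on (convex hull S) G (convex hull (S - {v}))"
    if v: "v \<in> S - {p}" for v
  proof -
    obtain u where "meet_obtusely S v u" "M * w u \<le> w v"
      using bspec[OF heavy v] by blast
    then have "M * l u \<le> l v"
      using scaled by simp
    obtain y z where lab: "S = {v, u, y, z}" "distinct [v, u, y, z]"
      and obtuse: "dihedral_inner y z v u < 0"
      using \<open>meet_obtusely S v u\<close> unfolding meet_obtusely_def by blast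
    define c where "c = dihedral_inner y z v u"
    define h where "h = norm (perp_to_line y z u)^2"
    have "h \<le> M * - c"
      using M lab obtuse unfolding bounds_dihedral_ratios_def dihedral_ratio_bound_def c_def h_def by blast
    then have "l u * h \<le> l u * (M * - c)"
      using l(1) lab by (intro mult_left_mono) auto
    also have "\<dots> = (M * l u) * - c"
      by (simp add: algebra_simps)
    also have "\<dots> \<le> l v * - c"
      using \<open>M * l u \<le> l v\<close> obtuse by (intro mult_right_mono) (auto simp: c_def)
    finally have "\<not> 0 < l u * norm (perp_to_line y z u)^2 + l v * dihedral_inner y z v u"
      by (simp add: c_def h_def)
    then show ?thesis
      using equilibrium_on_simplex_face_iff[OF S(1,2) _ l] lab v by blast
  qed
  have "monostable (convex hull S) G"
    unfolding monostable_simplex_iff[OF S(1,2)] using S(3) eq_p no_eq by blast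
  moreover have "stable_equilibrium_on (convex hull S) G (convex hull (S - {p}))"
    unfolding stable_equilibrium_on_def facet3_simplex_iff[OF S(1,2)] using S(3) eq_p by blast
  ultimately show ?thesis
    using \<open>G \<in> interior (convex hull S)\<close> by blast
qed

text \<open>The weights grow by the factor \<open>M\<close> along the path of faces away from the face opposite
  \<open>p\<close>; reversing the path reduces the four possible positions of \<open>p\<close> to the first two.\<close>

lemma monostable_from_dual_path:
  fixes S :: "(real^3) set"
  assumes S: "\<not> affine_dependent S" "card S = 4"
    and path: "S = {a, b, c, e}" "distinct [a, b, c, e]"
      "meet_obtusely S a b" "meet_obtusely S b c" "meet_obtusely S c e"
    and "p \<in> S"
  shows "\<exists>G\<in>interior (convex hull S). monostable (convex hull S) G \<and>
    stable_equilibrium_on (convex hull S) G (convex hull (S - {p}))"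
proof -
  obtain M where "1 \<le> M" and M: "bounds_dihedral_ratios S M"
    using bounds_dihedral_ratios_exists[OF S] by blast
  have powers: "0 < M" "M \<le> M^2" "M \<le> M^3" "M * M = M^2" "M * M^2 = M^3"
    using \<open>1 \<le> M\<close>
    by (auto simp: power2_eq_square power3_eq_cube intro: order_trans[OF _ mult_right_mono[of 1 M M]])
  have near_start: ?thesis
    if path: "S = {a, b, c, e}" "distinct [a, b, c, e]"
      "meet_obtusely S a b" "meet_obtusely S b c" "meet_obtusely S c e"
    and "p = a \<or> p = b" for a b c e
  proof -
    have reversed: "meet_obtusely S b a" "meet_obtusely S c b" "meet_obtusely S e c"
      using path meet_obtusely_sym by blast+
    from \<open>p = a \<or> p = b\<close> show ?thesis
    proof
      assume "p = a"
      show ?thesis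
      proof (rule monostable_of_weights[OF S \<open>p \<in> S\<close> M,
            where w = "\<lambda>v. if v = a then 1 else if v = b then M else if v = c then M^2 else M^3"])
        show "\<forall>v\<in>S. 0 < (if v = a then 1 else if v = b then M else if v = c then M^2 else M^3)"
          using powers by simp
      qed (use path reversed powers \<open>p = a\<close> in auto)
    next
      assume "p = b"
      show ?thesis
      proof (rule monostable_of_weights[OF S \<open>p \<in> S\<close> M,
            where w = "\<lambda>v. if v = b then 1 else if v = a then M else if v = c then M else M^2"])
        show "\<forall>v\<in>S. 0 < (if v = b then 1 else if v = a then M else if v = c then M else M^2)"
          using powers by simp
      qed (use path reversed powers \<open>p = b\<close> in auto)
    qed
  qed
  have "S = {e, c, b, a}" "distinct [e, c, b, a]"
    "meet_obtusely S e c" "meet_obtusely S c b" "meet_obtusely S b a"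
    using path meet_obtusely_sym by (auto simp: insert_commute)
  then show ?thesis
    using near_start[OF path] near_start[of e c b a] \<open>p \<in> S\<close> path(1) by blast
qed

lemma has_obtuse_path_iff_dual_path:
  assumes "distinct [A, B, C, D]"
  shows "has_obtuse_path A B C D \<longleftrightarrow> (\<exists>a b c e. {A, B, C, D} = {a, b, c, e} \<and> distinct [a, b, c, e] \<and>
    meet_obtusely {A, B, C, D} a b \<and> meet_obtusely {A, B, C, D} b c \<and>
    meet_obtusely {A, B, C, D} c e)"
  (is "_ \<longleftrightarrow> (\<exists>a b c e. ?S = _ \<and> _)")
proof
  assume "has_obtuse_path A B C D"
  then obtain a b c d where "{a, b, c, d} = ?S" "distinct [a, b, c, d]"
    and obtuse: "dihedral_inner a b c d < 0" "dihedral_inner b c a d < 0" "dihedral_inner c d a b < 0"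
    unfolding has_obtuse_path_def dihedral_angle_obtuse_iff by blast
  then have lab: "?S = {a, b, c, d}" "distinct [a, b, c, d]"
    by simp_all
  have "?S = {c, d, a, b}" "?S = {a, d, b, c}"
    unfolding lab(1) by (simp_all add: insert_commute)
  moreover have "distinct [c, d, a, b]" "distinct [a, d, b, c]"
    using lab(2) by auto
  ultimately have "meet_obtusely ?S c d" "meet_obtusely ?S a d" "meet_obtusely ?S a b"
    using meet_obtusely_iff[of ?S c d a b] meet_obtusely_iff[of ?S a d b c]
      meet_obtusely_iff[OF lab] obtuse
    by simp_all
  then have "?S = {c, d, a, b} \<and> distinct [c, d, a, b] \<and>
      meet_obtusely ?S c d \<and> meet_obtusely ?S d a \<and> meet_obtusely ?S a b"
    using \<open>?S = {c, d, a, b}\<close> \<open>distinct [c, d, a, b]\<close> meet_obtusely_sym by blast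
  then show "\<exists>a b c e. ?S = {a, b, c, e} \<and> distinct [a, b, c, e] \<and>
      meet_obtusely ?S a b \<and> meet_obtusely ?S b c \<and> meet_obtusely ?S c e"
    by (rule exI[of _ c, OF exI[of _ d, OF exI[of _ a, OF exI[of _ b]]]])
next
  assume "\<exists>a b c e. ?S = {a, b, c, e} \<and> distinct [a, b, c, e] \<and>
      meet_obtusely ?S a b \<and> meet_obtusely ?S b c \<and> meet_obtusely ?S c e"
  then obtain a b c e where lab: "?S = {a, b, c, e}" "distinct [a, b, c, e]"
    and dual: "meet_obtusely ?S a b" "meet_obtusely ?S b c" "meet_obtusely ?S c e"
    by blast
  have "?S = {b, c, a, e}" "?S = {c, e, a, b}"
    unfolding lab(1) by (simp_all add: insert_commute)
  moreover have "distinct [b, c, a, e]" "distinct [c, e, a, b]"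
    using lab(2) by auto
  ultimately have "dihedral_inner c e a b < 0" "dihedral_inner a e b c < 0" "dihedral_inner a b c e < 0"
    using meet_obtusely_iff[OF lab] meet_obtusely_iff[of ?S b c a e]
      meet_obtusely_iff[of ?S c e a b] dual
    by simp_all
  then have "dihedral_angle c e a b > pi / 2" "dihedral_angle e a c b > pi / 2"
    "dihedral_angle a b c e > pi / 2"
    unfolding dihedral_angle_obtuse_iff
    by (simp_all add: dihedral_inner_edge_commute[of e a] dihedral_inner_commute[of a e c])
  then show "has_obtuse_path A B C D"
    unfolding has_obtuse_path_def
    using \<open>?S = {c, e, a, b}\<close> \<open>distinct [c, e, a, b]\<close> by auto
qed

theorem theorem1p3:
  fixes A B C D :: "real^3"
  assumes "distinct [A, B, C, D]"
    and "\<not> affine_dependent {A, B, C, D}"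
  defines "T \<equiv> convex hull {A, B, C, D}"
  shows "(has_obtuse_path A B C D
            \<longleftrightarrow> (\<exists>G \<in> interior T. monostable T G))
       \<and> ((\<exists>G \<in> interior T. monostable T G)
            \<longleftrightarrow> (\<forall>F. facet3 F T \<longrightarrow>
                   (\<exists>G\<^sub>F \<in> interior T. monostable T G\<^sub>F \<and> stable_equilibrium_on T G\<^sub>F F)))"
proof -
  let ?S = "{A, B, C, D}"
  have S: "\<not> affine_dependent ?S" "card ?S = 4"
    using assms(1,2) by auto
  note dual_path = has_obtuse_path_iff_dual_path[OF assms(1)]
  have "has_obtuse_path A B C D \<Longrightarrow>
      \<forall>F. facet3 F T \<longrightarrow> (\<exists>G \<in> interior T. monostable T G \<and> stable_equilibrium_on T G F)"
    unfolding T_def facet3_simplex_iff[OF S] dual_path using monostable_from_dual_path[OF S] by blast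
  moreover have "facet3 (convex hull (?S - {A})) T"
    unfolding T_def facet3_simplex_iff[OF S] by blast
  moreover have "\<exists>G \<in> interior T. monostable T G \<Longrightarrow> has_obtuse_path A B C D"
    unfolding T_def dual_path using monostable_imp_dual_path[OF S] by blast
  ultimately show ?thesis
    by blast
qed

end
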